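(* Assume the scores are produced by a symmetric transformation and the intervals $\mathcal{I}_1,\ldots,\mathcal{I}_L$ are fixed (do not depend on the data). Then: (i) (Joint distribution-freeness) Under $H_0$ (i.e. $Z_1,\ldots,Z_n$ i.i.d. with an arbitrary law $P_1$), $(T_{n,1},\ldots,T_{n,L})$ has the same distribution as $\mathbb{G}(\pi)$, where $\pi$ is a uniformly random permutation of $[n]$; in particular its joint distribution does not depend on $P_1$. (ii) (Pivotalness to changes) If every interval $\mathcal{I}_\ell$, $\ell\in[L]$, contains no changepoint, i.e. for each $\ell$ there is $k\in[K^*+1]$ with $\mathcal{I}_\ell\subset(\tau^*_{k-1},\tau^*_k]$, then the joint distribution of $(T_{n,1},\ldots,T_{n,L})$ under the true law $\mathbb{P}^*$ is the same as under $H_0$ (namely the law of $\mathbb{G}(\pi)$).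
   Context: Let $Z_1,\ldots,Z_n$ be independent random elements of a measurable space $\mathcal{Z}$, $\mathcal{D}=(Z_1,\ldots,Z_n)$, with joint law $\mathbb{P}^*$. Changepoint model: there are $K^*\ge0$ and integers $0=\tau^*_0<\tau^*_1<\cdots<\tau^*_{K^*}<\tau^*_{K^*+1}=n$ such that for each $k\in[K^*+1]$ the $Z_i$, $i\in(\tau^*_{k-1},\tau^*_k]$, are identically distributed with law $P^*_k$, and $P^*_{k+1}\ne P^*_k$ for $k\in[K^*]$. The null hypothesis $H_0$ is $K^*=0$. A measurable $\mathbb{S}:\mathcal{Z}\times\mathcal{Z}^n\to\mathbb{R}$ is a symmetric transformation if $\mathbb{S}(z;\mathcal{D})=\mathbb{S}(z;\mathcal{D}_\pi)$ for all $z$ and all permutations $\pi$ of $[n]$, where $\mathcal{D}_\pi=(Z_{\pi(1)},\ldots,Z_{\pi(n)})$. Scores: $S_i=\mathbb{S}(Z_i;\mathcal{D})+\epsilon e_i$ with fixed $\epsilon>0$ and $e_i$ i.i.d. $\mathcal{N}(0,1)$ independent of the data. Let $\mathcal{I}_1,\ldots,\mathcal{I}_L$ be nonempty subsets (intervals) of $\{1,\ldots,n\}$ (possibly overlapping). For $i\in\mathcal{I}_\ell$ the local rank is $R_{i,\ell}=|\{j\in\mathcal{I}_\ell:S_j\le S_i\}|$. An aggregation function $\mathbb{A}$ maps a finite vector of ranks to $\mathbb{R}$; $T_{n,\ell}=\mathbb{A}((R_{i,\ell})_{i\in\mathcal{I}_\ell})$, the ranks listed in increasing order of $i$. For a permutation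 $\pi$ of $[n]$ define $\mathbb{G}(\pi)\in\mathbb{R}^L$ by $\mathbb{G}(\pi)_\ell=\mathbb{A}\big((|\{j\in\mathcal{I}_\ell:\pi(j)\le\pi(i)\}|)_{i\in\mathcal{I}_\ell}\big)$. *)

theory Defs
  imports "HOL-Probability.Probability"
begin

text \<open>Indices are 1-based: observations are indexed by {1..n}, intervals by {1..L}.
  A data set D is a function nat => 'a (entries D 1, ..., D n).\<close>

definition std_normal_measure :: "real measure" where
  "std_normal_measure = density lborel std_normal_density"

definition score :: "('a \<Rightarrow> (nat \<Rightarrow> 'a) \<Rightarrow> real) \<Rightarrow> real \<Rightarrow> (nat \<Rightarrow> 'a) \<Rightarrow> (nat \<Rightarrow> real) \<Rightarrow> nat \<Rightarrow> real" where
  "score SS eps D e i = SS (D i) D + eps * e i"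

definition local_rank :: "(nat \<Rightarrow> real) \<Rightarrow> nat set \<Rightarrow> nat \<Rightarrow> nat" where
  "local_rank S Il i = card {j \<in> Il. S j \<le> S i}"

definition Tstat :: "('a \<Rightarrow> (nat \<Rightarrow> 'a) \<Rightarrow> real) \<Rightarrow> real \<Rightarrow> (nat list \<Rightarrow> real) \<Rightarrow> nat \<Rightarrow> (nat \<Rightarrow> nat set)
    \<Rightarrow> (nat \<Rightarrow> 'a) \<times> (nat \<Rightarrow> real) \<Rightarrow> nat \<Rightarrow> real" where
  "Tstat SS eps A L I = (\<lambda>(D, e). \<lambda>l\<in>{1..L}.
      A (map (local_rank (score SS eps D e) (I l)) (sorted_list_of_set (I l))))"

definition Gmap :: "(nat list \<Rightarrow> real) \<Rightarrow> nat \<Rightarrow> (nat \<Rightarrow> nat set) \<Rightarrow> (nat \<Rightarrow> nat) \<Rightarrow> nat \<Rightarrow> real" where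
  "Gmap A L I \<pi> = (\<lambda>l\<in>{1..L}.
      A (map (\<lambda>i. card {j \<in> I l. \<pi> j \<le> \<pi> i}) (sorted_list_of_set (I l))))"

definition out_space :: "nat \<Rightarrow> (nat \<Rightarrow> real) measure" where
  "out_space L = PiM {1..L} (\<lambda>_. borel)"

definition Glaw :: "(nat list \<Rightarrow> real) \<Rightarrow> nat \<Rightarrow> (nat \<Rightarrow> nat set) \<Rightarrow> nat \<Rightarrow> (nat \<Rightarrow> real) measure" where
  "Glaw A L I n = distr (measure_pmf (pmf_of_set {\<pi>. \<pi> permutes {1..n}})) (out_space L) (Gmap A L I)"

definition Tlaw :: "'a measure \<Rightarrow> (nat \<Rightarrow> 'a measure) \<Rightarrow> ('a \<Rightarrow> (nat \<Rightarrow> 'a) \<Rightarrow> real) \<Rightarrow> real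
    \<Rightarrow> (nat list \<Rightarrow> real) \<Rightarrow> nat \<Rightarrow> (nat \<Rightarrow> nat set) \<Rightarrow> nat \<Rightarrow> (nat \<Rightarrow> real) measure" where
  "Tlaw M Q SS eps A L I n =
     distr (PiM {1..n} Q \<Otimes>\<^sub>M PiM {1..n} (\<lambda>_. std_normal_measure)) (out_space L) (Tstat SS eps A L I)"

end

(*
  Let H be the group of permutations of {1..n} that preserve the law Q_i of each observation;
  by assumption every interval I_l lies inside one H-block. Permuting data and Gaussian noise
  by s in H preserves their joint law and, by symmetry of the score map, permutes the scores
  by s. The scores are almost surely distinct, so T is almost surely G(rho o s) for the rank
  permutation rho of the scores. G(pi) only depends on the order of pi inside each interval, so
  composing with a block permutation that sorts rho inside every block shows that
  #{s in H. G(rho o s) in B} = #{s in H. G(s) in B} for every permutation rho. Averaging over H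
  gives P(T in B) = #{s in H. G(s) in B} / #H, and the same averaging applied to a uniformly
  random permutation pi gives this value for P(G(pi) in B).
*)

theory Submission
  imports Defs "HOL-Combinatorics.Permutations"
begin

section \<open>Ranks\<close>

definition rank_in :: "'i set \<Rightarrow> ('i \<Rightarrow> 'b::linorder) \<Rightarrow> 'i \<Rightarrow> nat" where
  "rank_in C f i = card {j\<in>C. f j \<le> f i}"

lemma rank_in_le_iff:
  assumes "finite C" "inj_on f C" "i \<in> C" "j \<in> C"
  shows "rank_in C f j \<le> rank_in C f i \<longleftrightarrow> f j \<le> f i"
proof
  assume "f j \<le> f i"
  then show "rank_in C f j \<le> rank_in C f i"
    using assms unfolding rank_in_def by (intro card_mono) auto
next
  assume le: "rank_in C f j \<le> rank_in C f i"
  show "f j \<le> f i"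
  proof (rule ccontr)
    assume "\<not> f j \<le> f i"
    then have "{k\<in>C. f k \<le> f i} \<subset> {k\<in>C. f k \<le> f j}"
      using assms by auto
    then have "rank_in C f i < rank_in C f j"
      using assms unfolding rank_in_def by (intro psubset_card_mono) auto
    with le show False by simp
  qed
qed

lemma inj_on_rank_in:
  assumes "finite C" "inj_on f C"
  shows "inj_on (rank_in C f) C"
proof (rule inj_onI)
  fix i j assume "i \<in> C" "j \<in> C" "rank_in C f i = rank_in C f j"
  then have "f i = f j"
    using rank_in_le_iff[OF assms \<open>i \<in> C\<close> \<open>j \<in> C\<close>] rank_in_le_iff[OF assms \<open>j \<in> C\<close> \<open>i \<in> C\<close>]
    by simp
  with \<open>i \<in> C\<close> \<open>j \<in> C\<close> show "i = j" using assms(2) by (meson inj_onD)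
qed

lemma rank_in_image:
  assumes "finite C" "inj_on f C"
  shows "rank_in C f ` C = {1..card C}"
proof -
  have "rank_in C f ` C \<subseteq> {1..card C}"
  proof
    fix r assume "r \<in> rank_in C f ` C"
    then obtain i where i: "i \<in> C" "r = rank_in C f i" by auto
    then have "i \<in> {j\<in>C. f j \<le> f i}" by simp
    then show "r \<in> {1..card C}"
      using i assms(1) unfolding rank_in_def
      by (auto simp: Suc_le_eq card_gt_0_iff intro: card_mono)
  qed
  moreover have "card (rank_in C f ` C) = card C"
    by (rule card_image[OF inj_on_rank_in[OF assms]])
  ultimately show ?thesis by (intro card_subset_eq) auto
qed

definition rank_perm :: "nat \<Rightarrow> (nat \<Rightarrow> 'b::linorder) \<Rightarrow> nat \<Rightarrow> nat" where
  "rank_perm n f i = (if i \<in> {1..n} then rank_in {1..n} f i else i)"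

lemma rank_perm_permutes:
  assumes "inj_on f {1..n}"
  shows "rank_perm n f permutes {1..n}"
proof (rule bij_imp_permutes)
  have eq: "rank_perm n f i = rank_in {1..n} f i" if "i \<in> {1..n}" for i
    using that by (simp add: rank_perm_def)
  have "bij_betw (rank_in {1..n} f) {1..n} {1..n}"
    using inj_on_rank_in[OF _ assms] rank_in_image[OF _ assms] by (simp add: bij_betw_def)
  then show "bij_betw (rank_perm n f) {1..n} {1..n}"
    using bij_betw_cong[of "{1..n}" "rank_perm n f" "rank_in {1..n} f"] eq by blast
qed (auto simp: rank_perm_def)

lemma rank_perm_le_iff:
  assumes "inj_on f {1..n}" "i \<in> {1..n}" "j \<in> {1..n}"
  shows "rank_perm n f j \<le> rank_perm n f i \<longleftrightarrow> f j \<le> f i"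
  using rank_in_le_iff[OF finite_atLeastAtMost assms] assms(2,3) by (simp add: rank_perm_def)

definition rank_stat :: "(nat list \<Rightarrow> real) \<Rightarrow> nat \<Rightarrow> (nat \<Rightarrow> nat set) \<Rightarrow> (nat \<Rightarrow> 'b::linorder) \<Rightarrow> nat \<Rightarrow> real" where
  "rank_stat A L I p = (\<lambda>l\<in>{1..L}. A (map (rank_in (I l) p) (sorted_list_of_set (I l))))"

lemma Gmap_eq_rank_stat: "Gmap A L I = rank_stat A L I"
  unfolding Gmap_def rank_stat_def rank_in_def[abs_def] ..

lemma Tstat_eq_rank_stat: "Tstat SS eps A L I (D, e) = rank_stat A L I (score SS eps D e)"
  unfolding Tstat_def rank_stat_def local_rank_def[abs_def] rank_in_def[abs_def] by simp

lemma rank_stat_cong_order: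
  fixes p :: "nat \<Rightarrow> 'b::linorder" and q :: "nat \<Rightarrow> 'c::linorder"
  assumes "\<And>l i j. l \<in> {1..L} \<Longrightarrow> i \<in> I l \<Longrightarrow> j \<in> I l \<Longrightarrow> p j \<le> p i \<longleftrightarrow> q j \<le> q i"
  shows "rank_stat A L I p = rank_stat A L I q"
  unfolding rank_stat_def
proof (intro restrict_ext arg_cong[where f = A] map_cong refl)
  fix l i assume "l \<in> {1..L}" "i \<in> set (sorted_list_of_set (I l))"
  then have "i \<in> I l"
    by (cases "finite (I l)") auto
  then have "{j \<in> I l. p j \<le> p i} = {j \<in> I l. q j \<le> q i}"
    using assms \<open>l \<in> {1..L}\<close> by blast
  then show "rank_in (I l) p i = rank_in (I l) q i"
    by (simp add: rank_in_def)
qed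

section \<open>Permutations within blocks\<close>

definition block_perms :: "'i set \<Rightarrow> ('i \<Rightarrow> 'b) \<Rightarrow> ('i \<Rightarrow> 'i) set" where
  "block_perms S b = {s. s permutes S \<and> (\<forall>i\<in>S. b (s i) = b i)}"

lemma finite_block_perms: "finite S \<Longrightarrow> finite (block_perms S b)"
  by (rule finite_subset[OF _ finite_permutations]) (auto simp: block_perms_def)

lemma id_in_block_perms: "id \<in> block_perms S b"
  by (simp add: block_perms_def permutes_id)

lemma block_perms_permutes: "s \<in> block_perms S b \<Longrightarrow> s permutes S"
  by (simp add: block_perms_def)

lemma block_perms_in_funcset: "s \<in> block_perms S b \<Longrightarrow> s \<in> S \<rightarrow> S"
  using permutes_in_image[of s S] by (auto simp: block_perms_def)

lemma block_perms_block: "s \<in> block_perms S b \<Longrightarrow> i \<in> S \<Longrightarrow> b (s i) = b i"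
  by (simp add: block_perms_def)

lemma block_perms_comp:
  assumes "g \<in> block_perms S b" "s \<in> block_perms S b"
  shows "g \<circ> s \<in> block_perms S b"
  using assms permutes_in_image[of s S] by (auto simp: block_perms_def permutes_compose)

lemma block_perms_inv:
  assumes "g \<in> block_perms S b"
  shows "inv g \<in> block_perms S b"
proof -
  have g: "g permutes S" "\<forall>i\<in>S. b (g i) = b i"
    using assms by (auto simp: block_perms_def)
  have "b (inv g i) = b i" if "i \<in> S" for i
  proof -
    have "inv g i \<in> S" using that permutes_in_image[OF permutes_inv[OF g(1)]] by simp
    then show ?thesis using g(2) permutes_inverses(1)[OF g(1)] by metis
  qed
  then show ?thesis using g by (simp add: block_perms_def permutes_inv)
qed

lemma ex_block_perm_sorting:
  fixes \<rho> :: "'i::linorder \<Rightarrow> 'c::linorder"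
  assumes S: "finite S" and \<rho>: "inj_on \<rho> S"
  shows "\<exists>g\<in>block_perms S b. \<forall>i\<in>S. \<forall>j\<in>S. b i = b j \<longrightarrow> (\<rho> (g j) \<le> \<rho> (g i) \<longleftrightarrow> j \<le> i)"
proof -
  define blk where "blk i = {j\<in>S. b j = b i}" for i
  have fin: "finite (blk i)" and inj: "inj_on \<rho> (blk i)" for i
    using S \<rho> by (auto simp: blk_def intro: inj_on_subset)
  define g where
    "g i = (if i \<in> S then the_inv_into (blk i) (rank_in (blk i) \<rho>) (rank_in (blk i) id i) else i)" for i
  have g: "g i \<in> blk i \<and> rank_in (blk i) \<rho> (g i) = rank_in (blk i) id i" if "i \<in> S" for i
  proof -
    have "i \<in> blk i" using that by (simp add: blk_def)
    then have "rank_in (blk i) id i \<in> rank_in (blk i) \<rho> ` blk i"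
      using rank_in_image[OF fin inj] rank_in_image[OF fin inj_on_id] by blast
    then show ?thesis
      using that inj_on_rank_in[OF fin inj] by (simp add: g_def the_inv_into_into f_the_inv_into_f)
  qed
  have g_block: "b (g i) = b i" if "i \<in> S" for i
    using g[OF that] by (simp add: blk_def)
  have g_order: "\<rho> (g j) \<le> \<rho> (g i) \<longleftrightarrow> j \<le> i" if "i \<in> S" "j \<in> S" "b i = b j" for i j
  proof -
    have same: "blk j = blk i" and ij: "i \<in> blk i" "j \<in> blk i"
      using that by (auto simp: blk_def)
    have gij: "g i \<in> blk i" "g j \<in> blk i"
      using g that same by auto
    have "\<rho> (g j) \<le> \<rho> (g i) \<longleftrightarrow> rank_in (blk i) \<rho> (g j) \<le> rank_in (blk i) \<rho> (g i)"
      by (rule rank_in_le_iff[OF fin inj gij, symmetric])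
    also have "\<dots> \<longleftrightarrow> rank_in (blk i) id j \<le> rank_in (blk i) id i"
      using g[OF \<open>i \<in> S\<close>] g[OF \<open>j \<in> S\<close>] same by simp
    also have "\<dots> \<longleftrightarrow> j \<le> i"
      using rank_in_le_iff[OF fin inj_on_id ij] by simp
    finally show ?thesis .
  qed
  have "inj_on g S"
  proof (rule inj_onI)
    fix i j assume "i \<in> S" "j \<in> S" "g i = g j"
    moreover from this have "b i = b j" using g_block by metis
    ultimately show "i = j" using g_order by (metis order_antisym order_refl)
  qed
  moreover have "g ` S \<subseteq> S"
    using g by (auto simp: blk_def)
  ultimately have "bij_betw g S S"
    using S by (simp add: bij_betw_def endo_inj_surj)
  then have "g permutes S"
    by (rule bij_imp_permutes) (simp add: g_def)
  with g_block g_order show ?thesis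
    unfolding block_perms_def by blast
qed

lemma card_block_perms_comp_left:
  assumes g: "g \<in> block_perms S b"
  shows "card {t\<in>block_perms S b. P (g \<circ> t)} = card {s\<in>block_perms S b. P s}"
proof (rule bij_betw_same_card[of "\<lambda>t. g \<circ> t"], rule bij_betw_byWitness[where f' = "\<lambda>s. inv g \<circ> s"])
  have g_perm: "g permutes S"
    using g by (rule block_perms_permutes)
  show "\<forall>t\<in>{t\<in>block_perms S b. P (g \<circ> t)}. inv g \<circ> (g \<circ> t) = t"
    by (simp add: o_assoc permutes_inv_o(2)[OF g_perm])
  show "\<forall>s\<in>{s\<in>block_perms S b. P s}. g \<circ> (inv g \<circ> s) = s"
    by (simp add: o_assoc permutes_inv_o(1)[OF g_perm])
  show "(\<lambda>t. g \<circ> t) ` {t\<in>block_perms S b. P (g \<circ> t)} \<subseteq> {s\<in>block_perms S b. P s}"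
    using g by (auto intro: block_perms_comp)
  show "(\<lambda>s. inv g \<circ> s) ` {s\<in>block_perms S b. P s} \<subseteq> {t\<in>block_perms S b. P (g \<circ> t)}"
    using g by (auto intro: block_perms_comp block_perms_inv simp: o_assoc permutes_inv_o(1)[OF g_perm])
qed

lemma card_block_perms_Gmap_comp:
  fixes \<rho> :: "nat \<Rightarrow> nat"
  assumes S: "finite S" and \<rho>: "inj_on \<rho> S"
    and I_sub: "\<And>l. l \<in> {1..L} \<Longrightarrow> I l \<subseteq> S"
    and I_block: "\<And>l i j. l \<in> {1..L} \<Longrightarrow> i \<in> I l \<Longrightarrow> j \<in> I l \<Longrightarrow> b i = b j"
  shows "card {s\<in>block_perms S b. Gmap A L I (\<rho> \<circ> s) \<in> B} = card {s\<in>block_perms S b. Gmap A L I s \<in> B}"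
proof -
  let ?G = "block_perms S b"
  obtain g where g: "g \<in> ?G"
    and g_order: "\<forall>i\<in>S. \<forall>j\<in>S. b i = b j \<longrightarrow> (\<rho> (g j) \<le> \<rho> (g i) \<longleftrightarrow> j \<le> i)"
    using ex_block_perm_sorting[OF S \<rho>, where b = b] by blast
  have Gmap_g: "Gmap A L I (\<rho> \<circ> (g \<circ> t)) = Gmap A L I t" if t: "t \<in> ?G" for t
    unfolding Gmap_eq_rank_stat
  proof (rule rank_stat_cong_order)
    fix l i j assume lij: "l \<in> {1..L}" "i \<in> I l" "j \<in> I l"
    then have ij: "i \<in> S" "j \<in> S"
      using I_sub by auto
    have "b (t i) = b (t j)"
      using block_perms_block[OF t] ij I_block[OF lij] by simp
    moreover have "t i \<in> S" "t j \<in> S"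
      using block_perms_in_funcset[OF t] ij by auto
    ultimately have "\<rho> (g (t j)) \<le> \<rho> (g (t i)) \<longleftrightarrow> t j \<le> t i"
      using g_order by blast
    then show "(\<rho> \<circ> (g \<circ> t)) j \<le> (\<rho> \<circ> (g \<circ> t)) i \<longleftrightarrow> t j \<le> t i"
      by simp
  qed
  have "card {s\<in>?G. Gmap A L I (\<rho> \<circ> s) \<in> B} = card {t\<in>?G. Gmap A L I (\<rho> \<circ> (g \<circ> t)) \<in> B}"
    by (rule card_block_perms_comp_left[OF g, symmetric])
  also have "{t\<in>?G. Gmap A L I (\<rho> \<circ> (g \<circ> t)) \<in> B} = {t\<in>?G. Gmap A L I t \<in> B}"
    using Gmap_g by auto
  finally show ?thesis .
qed

section \<open>Averaging over measure-preserving maps\<close>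

lemma emeasure_preimage_by_invariant_maps:
  assumes G: "finite G"
    and \<Phi>_meas: "\<And>s. s \<in> G \<Longrightarrow> \<Phi> s \<in> M \<rightarrow>\<^sub>M M"
    and \<Phi>_distr: "\<And>s. s \<in> G \<Longrightarrow> distr M M (\<Phi> s) = M"
    and X: "X \<in> M \<rightarrow>\<^sub>M N" and B: "B \<in> sets N"
    and count: "AE \<omega> in M. card {s\<in>G. X (\<Phi> s \<omega>) \<in> B} = c"
  shows "of_nat (card G) * emeasure M (X -` B \<inter> space M) = of_nat c * emeasure M (space M)"
proof -
  have ind_meas: "(\<lambda>\<omega>. indicator B (X \<omega>) :: ennreal) \<in> borel_measurable M"
    using X B by measurable
  have preimage: "emeasure M (X -` B \<inter> space M) = (\<integral>\<^sup>+\<omega>. indicator B (X \<omega>) \<partial>M)"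
  proof -
    have "emeasure M (X -` B \<inter> space M) = (\<integral>\<^sup>+\<omega>. indicator (X -` B \<inter> space M) \<omega> \<partial>M)"
      using measurable_sets[OF X B] by simp
    also have "\<dots> = (\<integral>\<^sup>+\<omega>. indicator B (X \<omega>) \<partial>M)"
      by (intro nn_integral_cong) (simp split: split_indicator)
    finally show ?thesis .
  qed
  have invariant: "emeasure M (X -` B \<inter> space M) = (\<integral>\<^sup>+\<omega>. indicator B (X (\<Phi> s \<omega>)) \<partial>M)"
    if s: "s \<in> G" for s
  proof -
    have "emeasure M (X -` B \<inter> space M) = (\<integral>\<^sup>+\<omega>. indicator B (X \<omega>) \<partial>distr M M (\<Phi> s))"
      unfolding preimage \<Phi>_distr[OF s] ..
    also have "\<dots> = (\<integral>\<^sup>+\<omega>. indicator B (X (\<Phi> s \<omega>)) \<partial>M)"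
      using ind_meas by (intro nn_integral_distr \<Phi>_meas[OF s]) simp
    finally show ?thesis .
  qed
  have count_sum: "(\<Sum>s\<in>G. indicator B (X (\<Phi> s \<omega>)) :: ennreal) = of_nat (card {s\<in>G. X (\<Phi> s \<omega>) \<in> B})"
    for \<omega>
    using G by (simp add: indicator_def sum.If_cases Int_def)
  have "of_nat (card G) * emeasure M (X -` B \<inter> space M) = (\<Sum>s\<in>G. emeasure M (X -` B \<inter> space M))"
    by simp
  also have "\<dots> = (\<Sum>s\<in>G. \<integral>\<^sup>+\<omega>. indicator B (X (\<Phi> s \<omega>)) \<partial>M)"
    using invariant by simp
  also have "\<dots> = (\<integral>\<^sup>+\<omega>. (\<Sum>s\<in>G. indicator B (X (\<Phi> s \<omega>))) \<partial>M)"
    using measurable_compose[OF \<Phi>_meas ind_meas] by (intro nn_integral_sum[symmetric]) auto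
  also have "\<dots> = (\<integral>\<^sup>+\<omega>. of_nat c \<partial>M)"
    using count unfolding count_sum by (intro nn_integral_cong_AE) auto
  finally show ?thesis
    by simp
qed

lemma measurable_map_count_space:
  fixes F :: "'m \<Rightarrow> 'x \<Rightarrow> 'b::countable"
  assumes "\<And>x. x \<in> set xs \<Longrightarrow> (\<lambda>\<omega>. F \<omega> x) \<in> M \<rightarrow>\<^sub>M count_space UNIV"
  shows "(\<lambda>\<omega>. map (F \<omega>) xs) \<in> M \<rightarrow>\<^sub>M count_space UNIV"
  using assms
proof (induction xs)
  case (Cons x xs)
  then have [measurable]: "(\<lambda>\<omega>. F \<omega> x) \<in> M \<rightarrow>\<^sub>M count_space UNIV"
    "(\<lambda>\<omega>. map (F \<omega>) xs) \<in> M \<rightarrow>\<^sub>M count_space UNIV"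
    by auto
  show ?case
    by simp measurable
qed simp

lemma measurable_rank_in:
  fixes f :: "nat \<Rightarrow> 'm \<Rightarrow> real"
  assumes f: "\<And>j. j \<in> C \<Longrightarrow> f j \<in> borel_measurable M" and i: "i \<in> C"
  shows "(\<lambda>\<omega>. rank_in C (\<lambda>j. f j \<omega>) i) \<in> M \<rightarrow>\<^sub>M count_space UNIV"
  unfolding rank_in_def
proof (rule measurable_card)
  fix j
  show "{\<omega> \<in> space M. j \<in> {k\<in>C. f k \<omega> \<le> f i \<omega>}} \<in> sets M"
  proof (cases "j \<in> C")
    case True
    with f i have [measurable]: "f j \<in> borel_measurable M" "f i \<in> borel_measurable M"
      by auto
    show ?thesis
      using True by simp
  qed simp
qed

lemma measurable_rank_stat:
  fixes f :: "nat \<Rightarrow> 'm \<Rightarrow> real"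
  assumes f: "\<And>l j. l \<in> {1..L} \<Longrightarrow> j \<in> I l \<Longrightarrow> f j \<in> borel_measurable M"
  shows "(\<lambda>\<omega>. rank_stat A L I (\<lambda>j. f j \<omega>)) \<in> M \<rightarrow>\<^sub>M out_space L"
  unfolding rank_stat_def out_space_def
proof (rule measurable_restrict)
  fix l assume l: "l \<in> {1..L}"
  have "(\<lambda>\<omega>. map (\<lambda>i. rank_in (I l) (\<lambda>j. f j \<omega>) i) (sorted_list_of_set (I l))) \<in> M \<rightarrow>\<^sub>M count_space UNIV"
  proof (rule measurable_map_count_space)
    fix i assume "i \<in> set (sorted_list_of_set (I l))"
    then have "i \<in> I l"
      by (cases "finite (I l)") auto
    then show "(\<lambda>\<omega>. rank_in (I l) (\<lambda>j. f j \<omega>) i) \<in> M \<rightarrow>\<^sub>M count_space UNIV"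
      using f[OF l] by (rule measurable_rank_in[rotated])
  qed
  then show "(\<lambda>\<omega>. A (map (rank_in (I l) (\<lambda>j. f j \<omega>)) (sorted_list_of_set (I l)))) \<in> borel_measurable M"
    by (rule measurable_compose) simp
qed

lemma prob_space_std_normal_measure: "prob_space std_normal_measure"
  unfolding std_normal_measure_def by (rule prob_space_normal_density) simp

lemma sets_std_normal_measure [measurable_cong]: "sets std_normal_measure = sets borel"
  by (simp add: std_normal_measure_def)

lemma emeasure_std_normal_measure_singleton: "emeasure std_normal_measure {x} = 0"
  unfolding std_normal_measure_def
  by (subst emeasure_density) (auto intro!: nn_integral_null_set simp: null_sets_def)

lemma AE_PiM_component_ne_shift:
  fixes N :: "real measure"
  assumes N: "prob_space N" "sets N = sets borel" "\<And>x. emeasure N {x} = 0"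
    and K: "finite K" "i \<notin> K" "j \<in> K"
  shows "AE e in PiM (insert i K) (\<lambda>_. N). e i \<noteq> e j + d"
proof -
  interpret N: prob_space N
    by (rule N(1))
  interpret product_sigma_finite "\<lambda>_. N"
    unfolding product_sigma_finite_def using N.sigma_finite_measure_axioms by simp
  note N(2)[measurable_cong]
  have space_N: "space N = UNIV"
    using sets_eq_imp_space_eq[OF N(2)] by simp
  define X where "X = {e\<in>space (PiM (insert i K) (\<lambda>_. N)). e i = e j + d}"
  have "i \<in> insert i K" "j \<in> insert i K"
    using K by auto
  then have X: "X \<in> sets (PiM (insert i K) (\<lambda>_. N))"
    unfolding X_def by measurable
  have "emeasure (PiM (insert i K) (\<lambda>_. N)) X = (\<integral>\<^sup>+e. indicator X e \<partial>PiM (insert i K) (\<lambda>_. N))"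
    using X by simp
  also have "\<dots> = (\<integral>\<^sup>+x. (\<integral>\<^sup>+y. indicator X (x(i := y)) \<partial>N) \<partial>PiM K (\<lambda>_. N))"
    using X K by (intro product_nn_integral_insert) auto
  also have "\<dots> = (\<integral>\<^sup>+x. 0 \<partial>PiM K (\<lambda>_. N))"
  proof (rule nn_integral_cong)
    fix x assume x: "x \<in> space (PiM K (\<lambda>_. N))"
    have "(\<integral>\<^sup>+y. indicator X (x(i := y)) \<partial>N) = (\<integral>\<^sup>+y. indicator {x j + d} y \<partial>N)"
    proof (rule nn_integral_cong)
      fix y
      have "x(i := y) \<in> space (PiM (insert i K) (\<lambda>_. N))"
        using x K by (auto simp: space_PiM PiE_def extensional_def space_N)
      then show "indicator X (x(i := y)) = (indicator {x j + d} y :: ennreal)"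
        using K by (auto simp: X_def indicator_def)
    qed
    then show "(\<integral>\<^sup>+y. indicator X (x(i := y)) \<partial>N) = 0"
      using N(2,3) by simp
  qed
  finally have "emeasure (PiM (insert i K) (\<lambda>_. N)) X = 0"
    by simp
  then show ?thesis
    by (subst AE_iff_measurable[OF X]) (auto simp: X_def)
qed

lemma measurable_PiM_reindex:
  assumes s: "s \<in> K \<rightarrow> K" and N: "\<And>k. k \<in> K \<Longrightarrow> N (s k) = N k"
  shows "(\<lambda>x. \<lambda>k\<in>K. x (s k)) \<in> PiM K N \<rightarrow>\<^sub>M PiM K N"
proof (rule measurable_restrict)
  fix k assume "k \<in> K"
  then show "(\<lambda>x. x (s k)) \<in> PiM K N \<rightarrow>\<^sub>M N k"
    using measurable_component_singleton[of "s k" K N] s N by auto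
qed

lemma distr_PiM_reindex_eq:
  assumes N: "\<And>k. k \<in> K \<Longrightarrow> prob_space (N k)"
    and s: "s permutes K" and N_s: "\<And>k. k \<in> K \<Longrightarrow> N (s k) = N k"
  shows "distr (PiM K N) (PiM K N) (\<lambda>x. \<lambda>k\<in>K. x (s k)) = PiM K N"
proof -
  have "PiM K (\<lambda>k. N (s k)) = PiM K N"
    using N_s by (intro PiM_cong) auto
  moreover have "inj_on s K" "s \<in> K \<rightarrow> K"
    using s by (auto simp: permutes_inj_on permutes_in_image)
  ultimately show ?thesis
    using distr_PiM_reindex[of K N s K, OF N] by simp
qed

section \<open>Samples that are homogeneous on each interval\<close>

locale score_setting =
  fixes M :: "'a measure" and SS :: "'a \<Rightarrow> (nat \<Rightarrow> 'a) \<Rightarrow> real" and eps :: real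
    and n L :: nat and I :: "nat \<Rightarrow> nat set"
  assumes eps_pos: "eps > 0"
    and SS_meas: "(\<lambda>(z, D). SS z D) \<in> M \<Otimes>\<^sub>M PiM {1..n} (\<lambda>_. M) \<rightarrow>\<^sub>M borel"
    and SS_sym: "\<And>z D \<pi>. z \<in> space M \<Longrightarrow> D \<in> space (PiM {1..n} (\<lambda>_. M)) \<Longrightarrow>
                   \<pi> permutes {1..n} \<Longrightarrow> SS z D = SS z (\<lambda>j. D (\<pi> j))"
    and I_sub: "\<And>l. l \<in> {1..L} \<Longrightarrow> I l \<subseteq> {1..n}"

locale homogeneous_intervals = score_setting M SS eps n L I
  for M :: "'a measure" and SS eps n L I +
  fixes Q :: "nat \<Rightarrow> 'a measure" and A :: "nat list \<Rightarrow> real"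
  assumes Q_prob: "\<And>i. i \<in> {1..n} \<Longrightarrow> prob_space (Q i)"
    and Q_sets: "\<And>i. i \<in> {1..n} \<Longrightarrow> sets (Q i) = sets M"
    and Q_const: "\<And>l i j. l \<in> {1..L} \<Longrightarrow> i \<in> I l \<Longrightarrow> j \<in> I l \<Longrightarrow> Q i = Q j"
begin

definition sample :: "((nat \<Rightarrow> 'a) \<times> (nat \<Rightarrow> real)) measure" where
  "sample = PiM {1..n} Q \<Otimes>\<^sub>M PiM {1..n} (\<lambda>_. std_normal_measure)"

definition scores :: "(nat \<Rightarrow> 'a) \<times> (nat \<Rightarrow> real) \<Rightarrow> nat \<Rightarrow> real" where
  "scores \<omega> = score SS eps (fst \<omega>) (snd \<omega>)"

definition permute_sample ::
    "(nat \<Rightarrow> nat) \<Rightarrow> (nat \<Rightarrow> 'a) \<times> (nat \<Rightarrow> real) \<Rightarrow> (nat \<Rightarrow> 'a) \<times> (nat \<Rightarrow> real)" where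
  "permute_sample s = (\<lambda>(D, e). (\<lambda>k\<in>{1..n}. D (s k), \<lambda>k\<in>{1..n}. e (s k)))"

lemma prob_space_sample: "prob_space sample"
  unfolding sample_def
  by (intro prob_space_pair prob_space_PiM Q_prob prob_space_std_normal_measure) auto

lemma sets_sample: "sets sample = sets (PiM {1..n} (\<lambda>_. M) \<Otimes>\<^sub>M PiM {1..n} (\<lambda>_. borel :: real measure))"
  unfolding sample_def
  by (intro sets_pair_measure_cong sets_PiM_cong) (simp_all add: Q_sets sets_std_normal_measure)

lemma measurable_scores: "i \<in> {1..n} \<Longrightarrow> (\<lambda>\<omega>. scores \<omega> i) \<in> borel_measurable sample"
  unfolding measurable_cong_sets[OF sets_sample refl] scores_def score_def
  using SS_meas by measurable

lemma measurable_Tstat: "Tstat SS eps A L I \<in> sample \<rightarrow>\<^sub>M out_space L"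
proof -
  have "Tstat SS eps A L I = (\<lambda>\<omega>. rank_stat A L I (\<lambda>j. scores \<omega> j))"
    by (auto simp: fun_eq_iff scores_def Tstat_eq_rank_stat)
  also have "\<dots> \<in> sample \<rightarrow>\<^sub>M out_space L"
    using I_sub measurable_scores by (intro measurable_rank_stat) blast
  finally show ?thesis .
qed

lemma AE_scores_ne:
  assumes ij: "i \<in> {1..n}" "j \<in> {1..n}" "i \<noteq> j"
  shows "AE \<omega> in sample. scores \<omega> i \<noteq> scores \<omega> j"
proof -
  let ?N = "\<lambda>_::nat. std_normal_measure"
  interpret data: prob_space "PiM {1..n} Q"
    by (intro prob_space_PiM Q_prob)
  interpret noise: prob_space "PiM {1..n} ?N"
    by (intro prob_space_PiM prob_space_std_normal_measure)
  interpret pair_sigma_finite "PiM {1..n} Q" "PiM {1..n} ?N" ..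
  have noise_ne: "AE e in PiM {1..n} ?N. scores (D, e) i \<noteq> scores (D, e) j" for D
  proof -
    let ?d = "(SS (D j) D - SS (D i) D) / eps"
    have "insert i ({1..n} - {i}) = {1..n}"
      using ij by auto
    then have "AE e in PiM {1..n} ?N. e i \<noteq> e j + ?d"
      using AE_PiM_component_ne_shift[OF prob_space_std_normal_measure sets_std_normal_measure
          emeasure_std_normal_measure_singleton, of "{1..n} - {i}" i j ?d] ij
      by (simp only:) auto
    then show ?thesis
    proof eventually_elim
      case (elim e)
      with eps_pos show ?case
        by (auto simp: scores_def score_def field_simps)
    qed
  qed
  have "{\<omega> \<in> space sample. scores \<omega> i \<noteq> scores \<omega> j} \<in> sets sample"
    using measurable_scores[OF ij(1)] measurable_scores[OF ij(2)] by measurable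
  then show ?thesis
    unfolding sample_def by (rule AE_pair_measure[OF _ AE_I2[OF noise_ne]])
qed

lemma AE_inj_on_scores: "AE \<omega> in sample. inj_on (scores \<omega>) {1..n}"
proof -
  have "AE \<omega> in sample. \<forall>(i, j)\<in>{1..n} \<times> {1..n}. i \<noteq> j \<longrightarrow> scores \<omega> i \<noteq> scores \<omega> j"
    using AE_scores_ne by (subst AE_finite_all) auto
  then show ?thesis
    by eventually_elim (auto simp: inj_on_def)
qed

lemma measurable_permute_sample:
  assumes "s \<in> block_perms {1..n} Q"
  shows "permute_sample s \<in> sample \<rightarrow>\<^sub>M sample"
proof -
  have s: "s \<in> {1..n} \<rightarrow> {1..n}"
    using assms by (rule block_perms_in_funcset)
  have D: "(\<lambda>x. \<lambda>k\<in>{1..n}. x (s k)) \<in> PiM {1..n} Q \<rightarrow>\<^sub>M PiM {1..n} Q"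
    using s assms by (intro measurable_PiM_reindex) (auto simp: block_perms_block)
  have e: "(\<lambda>x. \<lambda>k\<in>{1..n}. x (s k)) \<in> PiM {1..n} (\<lambda>_. std_normal_measure) \<rightarrow>\<^sub>M PiM {1..n} (\<lambda>_. std_normal_measure)"
    using s by (rule measurable_PiM_reindex) simp
  show ?thesis
    unfolding permute_sample_def split_beta' sample_def
    by (intro measurable_Pair measurable_compose[OF measurable_fst D] measurable_compose[OF measurable_snd e])
qed

lemma distr_permute_sample:
  assumes "s \<in> block_perms {1..n} Q"
  shows "distr sample sample (permute_sample s) = sample"
proof -
  let ?N = "\<lambda>_::nat. std_normal_measure"
  let ?r = "\<lambda>x. \<lambda>k\<in>{1..n}. x (s k)"
  have s: "s permutes {1..n}" "s \<in> {1..n} \<rightarrow> {1..n}" and Q_s: "\<And>k. k \<in> {1..n} \<Longrightarrow> Q (s k) = Q k"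
    using assms by (simp_all add: block_perms_permutes block_perms_in_funcset block_perms_block)
  have D_meas: "?r \<in> PiM {1..n} Q \<rightarrow>\<^sub>M PiM {1..n} Q"
    using s(2) Q_s by (rule measurable_PiM_reindex)
  have e_meas: "?r \<in> PiM {1..n} ?N \<rightarrow>\<^sub>M PiM {1..n} ?N"
    using s(2) refl by (rule measurable_PiM_reindex)
  have D_distr: "distr (PiM {1..n} Q) (PiM {1..n} Q) ?r = PiM {1..n} Q"
    using Q_prob s(1) Q_s by (rule distr_PiM_reindex_eq[of "{1..n}" Q s])
  have e_distr: "distr (PiM {1..n} ?N) (PiM {1..n} ?N) ?r = PiM {1..n} ?N"
    using prob_space_std_normal_measure s(1) refl by (rule distr_PiM_reindex_eq)
  interpret N: prob_space "PiM {1..n} ?N"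
    by (intro prob_space_PiM prob_space_std_normal_measure)
  have "sigma_finite_measure (distr (PiM {1..n} ?N) (PiM {1..n} ?N) ?r)"
    unfolding e_distr by (rule N.sigma_finite_measure_axioms)
  with D_meas e_meas
  have "distr (PiM {1..n} Q) (PiM {1..n} Q) ?r \<Otimes>\<^sub>M distr (PiM {1..n} ?N) (PiM {1..n} ?N) ?r
      = distr sample (PiM {1..n} Q \<Otimes>\<^sub>M PiM {1..n} ?N) (\<lambda>(x, y). (?r x, ?r y))"
    unfolding sample_def by (rule pair_measure_distr)
  then show ?thesis
    unfolding D_distr e_distr permute_sample_def by (simp only: sample_def)
qed

lemma scores_permute_sample:
  assumes \<omega>: "\<omega> \<in> space sample" and s: "s permutes {1..n}" and i: "i \<in> {1..n}"
  shows "scores (permute_sample s \<omega>) i = scores \<omega> (s i)"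
proof -
  obtain D e where \<omega>_eq: "\<omega> = (D, e)"
    by (cases \<omega>)
  have "D \<in> space (PiM {1..n} Q)"
    using \<omega> by (simp add: \<omega>_eq sample_def space_pair_measure)
  moreover have "space (Q k) = space M" if "k \<in> {1..n}" for k
    using Q_sets[OF that] by (rule sets_eq_imp_space_eq)
  ultimately have D: "D \<in> space (PiM {1..n} (\<lambda>_. M))"
    by (simp add: space_PiM PiE_def Pi_def)
  have "(\<lambda>k\<in>{1..n}. D (s k)) = (\<lambda>k. D (s k))"
    using D permutes_not_in[OF s] by (auto simp: space_PiM PiE_def extensional_def fun_eq_iff)
  moreover have "s i \<in> {1..n}"
    using permutes_in_image[OF s] i by blast
  moreover from this have "D (s i) \<in> space M"
    using D by (auto simp: space_PiM)
  ultimately show ?thesis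
    using i SS_sym[OF _ D s] by (simp add: \<omega>_eq permute_sample_def scores_def score_def)
qed

lemma Tstat_permute_sample:
  assumes \<omega>: "\<omega> \<in> space sample" and inj: "inj_on (scores \<omega>) {1..n}" and s: "s permutes {1..n}"
  shows "Tstat SS eps A L I (permute_sample s \<omega>) = Gmap A L I (rank_perm n (scores \<omega>) \<circ> s)"
proof -
  have "Tstat SS eps A L I (permute_sample s \<omega>) = rank_stat A L I (scores (permute_sample s \<omega>))"
    by (cases "permute_sample s \<omega>") (simp add: Tstat_eq_rank_stat scores_def)
  also have "\<dots> = rank_stat A L I (rank_perm n (scores \<omega>) \<circ> s)"
  proof (rule rank_stat_cong_order)
    fix l i j assume "l \<in> {1..L}" "i \<in> I l" "j \<in> I l"
    then have ij: "i \<in> {1..n}" "j \<in> {1..n}"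
      using I_sub by blast+
    then have "s i \<in> {1..n}" "s j \<in> {1..n}"
      using permutes_in_image[OF s] by blast+
    then show "scores (permute_sample s \<omega>) j \<le> scores (permute_sample s \<omega>) i \<longleftrightarrow>
        (rank_perm n (scores \<omega>) \<circ> s) j \<le> (rank_perm n (scores \<omega>) \<circ> s) i"
      using ij rank_perm_le_iff[OF inj] by (simp add: scores_permute_sample[OF \<omega> s])
  qed
  finally show ?thesis
    by (simp add: Gmap_eq_rank_stat)
qed

lemma card_mult_emeasure_Tlaw:
  assumes B: "B \<in> sets (out_space L)"
  shows "of_nat (card (block_perms {1..n} Q)) * emeasure (Tlaw M Q SS eps A L I n) B
    = of_nat (card {s\<in>block_perms {1..n} Q. Gmap A L I s \<in> B})"
proof -
  let ?G = "block_perms {1..n} Q"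
  interpret prob_space sample
    by (rule prob_space_sample)
  have "AE \<omega> in sample. card {s\<in>?G. Tstat SS eps A L I (permute_sample s \<omega>) \<in> B}
      = card {s\<in>?G. Gmap A L I s \<in> B}"
    using AE_space AE_inj_on_scores
  proof eventually_elim
    case (elim \<omega>)
    have "Tstat SS eps A L I (permute_sample s \<omega>) = Gmap A L I (rank_perm n (scores \<omega>) \<circ> s)"
      if "s \<in> ?G" for s
      using Tstat_permute_sample[OF elim block_perms_permutes[OF that]] .
    then have "{s\<in>?G. Tstat SS eps A L I (permute_sample s \<omega>) \<in> B}
        = {s\<in>?G. Gmap A L I (rank_perm n (scores \<omega>) \<circ> s) \<in> B}"
      by auto
    also have "card \<dots> = card {s\<in>?G. Gmap A L I s \<in> B}"
      using permutes_inj_on[OF rank_perm_permutes[OF elim(2)]]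
      by (intro card_block_perms_Gmap_comp I_sub Q_const) auto
    finally show ?case .
  qed
  from emeasure_preimage_by_invariant_maps[OF finite_block_perms measurable_permute_sample
      distr_permute_sample measurable_Tstat B this]
  have "of_nat (card ?G) * emeasure sample (Tstat SS eps A L I -` B \<inter> space sample)
      = of_nat (card {s\<in>?G. Gmap A L I s \<in> B})"
    by (simp add: emeasure_space_1)
  moreover have "Tlaw M Q SS eps A L I n = distr sample (out_space L) (Tstat SS eps A L I)"
    by (simp add: Tlaw_def sample_def)
  ultimately show ?thesis
    by (simp add: emeasure_distr[OF measurable_Tstat B])
qed

end

lemma distr_uniform_permutation_comp:
  assumes S: "finite S" and s: "s permutes S"
  defines "U \<equiv> measure_pmf (pmf_of_set {p. p permutes S})"
  shows "distr U U (\<lambda>p. p \<circ> s) = U"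
proof -
  let ?P = "{p. p permutes S}"
  have P: "finite ?P" "?P \<noteq> {}"
    using finite_permutations[OF S] permutes_id[of S] by blast+
  have "(\<lambda>p. p \<circ> s) ` ?P = ?P"
    using image_compose_permutations_right[OF s] by blast
  moreover have "inj_on (\<lambda>p. p \<circ> s) ?P"
  proof (rule inj_onI)
    fix p q assume "p \<circ> s = q \<circ> s"
    then have "p \<circ> (s \<circ> inv s) = q \<circ> (s \<circ> inv s)"
      by (simp only: comp_assoc[symmetric])
    then show "p = q"
      using permutes_inv_o(1)[OF s] by simp
  qed
  ultimately have map_eq: "map_pmf (\<lambda>p. p \<circ> s) (pmf_of_set ?P) = pmf_of_set ?P"
    using map_pmf_of_set_inj P by metis
  have "distr U U (\<lambda>p. p \<circ> s) = distr U (count_space UNIV) (\<lambda>p. p \<circ> s)"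
    by (rule distr_cong) (simp_all add: U_def)
  also have "\<dots> = U"
    unfolding U_def map_pmf_rep_eq[symmetric] map_eq ..
  finally show ?thesis .
qed

lemma card_mult_emeasure_Glaw:
  assumes I_sub: "\<And>l. l \<in> {1..L} \<Longrightarrow> I l \<subseteq> {1..n}"
    and I_block: "\<And>l i j. l \<in> {1..L} \<Longrightarrow> i \<in> I l \<Longrightarrow> j \<in> I l \<Longrightarrow> b i = b j"
    and B: "B \<in> sets (out_space L)"
  shows "of_nat (card (block_perms {1..n} b)) * emeasure (Glaw A L I n) B
    = of_nat (card {s\<in>block_perms {1..n} b. Gmap A L I s \<in> B})"
proof -
  let ?G = "block_perms {1..n} b" and ?P = "{p. p permutes {1..n}}"
  let ?U = "measure_pmf (pmf_of_set ?P)"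
  have P: "finite ?P" "?P \<noteq> {}"
    using finite_permutations[of "{1..n}"] permutes_id[of "{1..n}"] by blast+
  have Gmap_meas: "Gmap A L I \<in> ?U \<rightarrow>\<^sub>M out_space L"
    by (simp add: Gmap_def out_space_def space_PiM)
  have distr_comp: "distr ?U ?U (\<lambda>p. p \<circ> s) = ?U" if "s \<in> ?G" for s
    using block_perms_permutes[OF that] by (intro distr_uniform_permutation_comp) simp
  have "card {s\<in>?G. Gmap A L I (p \<circ> s) \<in> B} = card {s\<in>?G. Gmap A L I s \<in> B}" if "p \<in> ?P" for p
  proof (rule card_block_perms_Gmap_comp)
    show "inj_on p {1..n}"
      using that by (simp add: permutes_inj_on)
    show "\<And>l. l \<in> {1..L} \<Longrightarrow> I l \<subseteq> {1..n}"
      by (rule I_sub)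
    show "\<And>l i j. l \<in> {1..L} \<Longrightarrow> i \<in> I l \<Longrightarrow> j \<in> I l \<Longrightarrow> b i = b j"
      by (rule I_block)
  qed simp
  then have "AE p in ?U. card {s\<in>?G. Gmap A L I (p \<circ> s) \<in> B} = card {s\<in>?G. Gmap A L I s \<in> B}"
    using P by (simp add: AE_measure_pmf_iff)
  from emeasure_preimage_by_invariant_maps[OF finite_block_perms _ distr_comp Gmap_meas B this]
  show ?thesis
    unfolding Glaw_def emeasure_distr[OF Gmap_meas B] by (simp add: measure_pmf.emeasure_space_1)
qed

context homogeneous_intervals
begin

lemma Tlaw_eq_Glaw: "Tlaw M Q SS eps A L I n = Glaw A L I n"
proof (rule measure_eqI)
  show "sets (Tlaw M Q SS eps A L I n) = sets (Glaw A L I n)"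
    by (simp add: Tlaw_def Glaw_def)
  fix B assume "B \<in> sets (Tlaw M Q SS eps A L I n)"
  then have B: "B \<in> sets (out_space L)"
    by (simp add: Tlaw_def)
  let ?k = "of_nat (card (block_perms {1..n} Q)) :: ennreal"
  have "?k * emeasure (Glaw A L I n) B = of_nat (card {s\<in>block_perms {1..n} Q. Gmap A L I s \<in> B})"
    by (rule card_mult_emeasure_Glaw[OF I_sub Q_const B])
  then have "?k * emeasure (Tlaw M Q SS eps A L I n) B = ?k * emeasure (Glaw A L I n) B"
    using card_mult_emeasure_Tlaw[OF B] by simp
  moreover have "?k \<noteq> 0"
    using finite_block_perms[of "{1..n}" Q] id_in_block_perms[of "{1..n}" Q] by auto
  ultimately show "emeasure (Tlaw M Q SS eps A L I n) B = emeasure (Glaw A L I n) B"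
    using ennreal_mult_cancel_left ennreal_of_nat_neq_top by metis
qed

end

section \<open>The changepoint model\<close>

lemma changepoint_segment:
  fixes \<tau> :: "nat \<Rightarrow> nat"
  assumes "\<tau> 0 = 0" "\<tau> (K + 1) = n" "i \<in> {1..n}"
  shows "\<exists>k\<in>{1..K+1}. i \<in> {\<tau> (k - 1)<..\<tau> k}"
proof -
  define k where "k = (LEAST k. i \<le> \<tau> k)"
  have "i \<le> \<tau> (K + 1)"
    using assms by simp
  then have "i \<le> \<tau> k" "k \<le> K + 1"
    unfolding k_def by (auto intro: LeastI Least_le)
  moreover from this have "k \<noteq> 0"
    using assms by (cases k) auto
  moreover from this have "\<not> i \<le> \<tau> (k - 1)"
    unfolding k_def by (intro not_less_Least) simp
  ultimately show ?thesis
    by (intro bexI[of _ k]) auto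
qed

context score_setting
begin

lemma Tlaw_eq_Glaw_iid:
  assumes "prob_space P1" "sets P1 = sets M"
  shows "Tlaw M (\<lambda>_. P1) SS eps A L I n = Glaw A L I n"
proof -
  interpret homogeneous_intervals M SS eps n L I "\<lambda>_. P1" A
    using assms
    by (intro homogeneous_intervals.intro score_setting_axioms homogeneous_intervals_axioms.intro) auto
  show ?thesis
    by (rule Tlaw_eq_Glaw)
qed

lemma Tlaw_eq_Glaw_changepoint:
  fixes \<tau> :: "nat \<Rightarrow> nat"
  assumes \<tau>_ends: "\<tau> 0 = 0" "\<tau> (K + 1) = n"
    and P_law: "\<forall>k \<in> {1..K+1}. prob_space (P k) \<and> sets (P k) = sets M"
    and segment_law: "\<forall>k \<in> {1..K+1}. \<forall>i \<in> {\<tau> (k - 1)<..\<tau> k}. Q i = P k"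
    and I_segment: "\<forall>l \<in> {1..L}. \<exists>k \<in> {1..K+1}. I l \<subseteq> {\<tau> (k - 1)<..\<tau> k}"
  shows "Tlaw M Q SS eps A L I n = Glaw A L I n"
proof -
  have Q_law: "prob_space (Q i) \<and> sets (Q i) = sets M" if i: "i \<in> {1..n}" for i
  proof -
    obtain k where "k \<in> {1..K+1}" "i \<in> {\<tau> (k - 1)<..\<tau> k}"
      using changepoint_segment[OF \<tau>_ends i] by blast
    then show ?thesis
      using segment_law P_law by simp
  qed
  have Q_const: "Q i = Q j" if lij: "l \<in> {1..L}" "i \<in> I l" "j \<in> I l" for l i j
  proof -
    obtain k where "k \<in> {1..K+1}" "I l \<subseteq> {\<tau> (k - 1)<..\<tau> k}"
      using I_segment lij(1) by blast
    then show ?thesis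
      using segment_law lij(2,3) by (metis subsetD)
  qed
  interpret homogeneous_intervals M SS eps n L I Q A
    by (intro homogeneous_intervals.intro score_setting_axioms homogeneous_intervals_axioms.intro Q_const)
      (simp_all add: Q_law)
  show ?thesis
    by (rule Tlaw_eq_Glaw)
qed

end

theorem theorem2:
  fixes M :: "'a measure"
    and SS :: "'a \<Rightarrow> (nat \<Rightarrow> 'a) \<Rightarrow> real"
    and eps :: real
    and A :: "nat list \<Rightarrow> real"
    and n L :: nat
    and I :: "nat \<Rightarrow> nat set"
  assumes eps_pos: "eps > 0"
    and SS_meas: "(\<lambda>(z, D). SS z D) \<in> M \<Otimes>\<^sub>M PiM {1..n} (\<lambda>_. M) \<rightarrow>\<^sub>M borel"
    and SS_sym: "\<And>z D \<pi>. z \<in> space M \<Longrightarrow> D \<in> space (PiM {1..n} (\<lambda>_. M)) \<Longrightarrow>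
                   \<pi> permutes {1..n} \<Longrightarrow> SS z D = SS z (\<lambda>j. D (\<pi> j))"
    and I_sub: "\<And>l. l \<in> {1..L} \<Longrightarrow> I l \<subseteq> {1..n}"
    and I_ne: "\<And>l. l \<in> {1..L} \<Longrightarrow> I l \<noteq> {}"
  shows
    "(\<forall>P1. prob_space P1 \<and> sets P1 = sets M \<longrightarrow>
          Tlaw M (\<lambda>_. P1) SS eps A L I n = Glaw A L I n)
     \<and>
     (\<forall>(K::nat) (\<tau>::nat \<Rightarrow> nat) (P::nat \<Rightarrow> 'a measure) (Q::nat \<Rightarrow> 'a measure).
        (\<tau> 0 = 0 \<and> \<tau> (K + 1) = n \<and> (\<forall>k \<le> K. \<tau> k < \<tau> (k + 1))
         \<and> (\<forall>k \<in> {1..K+1}. prob_space (P k) \<and> sets (P k) = sets M)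
         \<and> (\<forall>k \<in> {1..K}. P (k + 1) \<noteq> P k)
         \<and> (\<forall>k \<in> {1..K+1}. \<forall>i \<in> {\<tau> (k - 1)<..\<tau> k}. Q i = P k)
         \<and> (\<forall>l \<in> {1..L}. \<exists>k \<in> {1..K+1}. I l \<subseteq> {\<tau> (k - 1)<..\<tau> k}))
        \<longrightarrow> Tlaw M Q SS eps A L I n = Glaw A L I n)"
proof -
  interpret score_setting M SS eps n L I
    by (intro score_setting.intro eps_pos SS_meas SS_sym I_sub)
  show ?thesis
    by (intro conjI allI impI; elim conjE)
      (rule Tlaw_eq_Glaw_iid Tlaw_eq_Glaw_changepoint; assumption)+
qed

end
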